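(* Let $\Gamma_3^*\subseteq\mathbb{R}^7$ be the set of entropy vectors of triples of discrete random variables. Let $\mathbf{e}_1=[1,0,0,1,1,0,1]^\intercal$, $\mathbf{e}_2=[0,1,0,1,0,1,1]^\intercal$, $\mathbf{e}_3=[0,0,1,0,1,1,1]^\intercal$, $\mathbf{e}_{12}=[1,1,0,1,1,1,1]^\intercal$, $\mathbf{e}_{123'}=[1,1,1,2,2,2,2]^\intercal$, and $\Omega=\mathrm{cone}(\mathbf{e}_1,\mathbf{e}_2,\mathbf{e}_3,\mathbf{e}_{12},\mathbf{e}_{123'})$. Let $\Omega^{\mathrm{in}}$ be the set of all vectors $\lambda_1\mathbf{e}_1+\lambda_2\mathbf{e}_2+\lambda_3\mathbf{e}_3+\lambda_{12}\mathbf{e}_{12}+\lambda_{123'}\mathbf{e}_{123'}$ with all $\lambda_j\ge 0$ such that at least one of the following holds: (i) $\lambda_{12}+\lambda_{123'}\ge\log\lceil 2^{\lambda_{123'}}\rceil$; (ii) $\lambda_{123'}=\log m$ for some $m\in\mathbb{N}$. Then $\Omega^{\mathrm{in}}\subseteq\Omega\cap\Gamma_3^*$.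
   Context: All logarithms are base 2 and entropies are in bits. For a discrete random vector $(X_1,X_2,X_3)$, its entropy vector is $[h_1,h_2,h_3,h_{12},h_{13},h_{23},h_{123}]^\intercal\in\mathbb{R}^7$, where $h_\alpha$ is the Shannon entropy of $(X_i)_{i\in\alpha}$. *)

theory Defs
  imports "HOL-Analysis.Analysis" "HOL-Probability.Probability_Mass_Function"
begin

definition shannon_entropy :: "'a pmf \<Rightarrow> real" where
  "shannon_entropy p = (\<Sum>x\<in>set_pmf p. - pmf p x * log 2 (pmf p x))"

definition entropy_vector :: "('a \<times> 'b \<times> 'c) pmf \<Rightarrow> real ^ 7" where
  "entropy_vector p = vector
     [ shannon_entropy (map_pmf (\<lambda>(x,y,z). x) p),
       shannon_entropy (map_pmf (\<lambda>(x,y,z). y) p),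
       shannon_entropy (map_pmf (\<lambda>(x,y,z). z) p),
       shannon_entropy (map_pmf (\<lambda>(x,y,z). (x,y)) p),
       shannon_entropy (map_pmf (\<lambda>(x,y,z). (x,z)) p),
       shannon_entropy (map_pmf (\<lambda>(x,y,z). (y,z)) p),
       shannon_entropy p ]"

definition Gamma3_star :: "(real ^ 7) set" where
  "Gamma3_star = {entropy_vector p | p :: (nat \<times> nat \<times> nat) pmf. finite (set_pmf p)}"

definition e1 :: "real ^ 7" where "e1 = vector [1,0,0,1,1,0,1]"
definition e2 :: "real ^ 7" where "e2 = vector [0,1,0,1,0,1,1]"
definition e3 :: "real ^ 7" where "e3 = vector [0,0,1,0,1,1,1]"
definition e12 :: "real ^ 7" where "e12 = vector [1,1,0,1,1,1,1]"
definition e123' :: "real ^ 7" where "e123' = vector [1,1,1,2,2,2,2]"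

definition Omega :: "(real ^ 7) set" where
  "Omega = {l1 *\<^sub>R e1 + l2 *\<^sub>R e2 + l3 *\<^sub>R e3 + l12 *\<^sub>R e12 + l123 *\<^sub>R e123' |
              l1 l2 l3 l12 l123. l1 \<ge> 0 \<and> l2 \<ge> 0 \<and> l3 \<ge> 0 \<and> l12 \<ge> 0 \<and> l123 \<ge> 0}"

definition Omega_in :: "(real ^ 7) set" where
  "Omega_in = {l1 *\<^sub>R e1 + l2 *\<^sub>R e2 + l3 *\<^sub>R e3 + l12 *\<^sub>R e12 + l123 *\<^sub>R e123' |
              l1 l2 l3 l12 l123. l1 \<ge> 0 \<and> l2 \<ge> 0 \<and> l3 \<ge> 0 \<and> l12 \<ge> 0 \<and> l123 \<ge> 0 \<and>
              (l12 + l123 \<ge> log 2 (real_of_int \<lceil>2 powr l123\<rceil>) \<or>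
               (\<exists>m::nat. m \<ge> 1 \<and> l123 = log 2 (real m)))}"

end

(*
  Every vector l *R e for e among e1, e2, e3, e12 and l >= 0 is entropic: take one variable of
  entropy l and copy it into the coordinates where e is 1.  Entropic vectors are closed under
  addition, by juxtaposing independent triples.  For the last generator, let U be uniform on
  Z/n and Q independent of U, supported in Z/n with H(Q) = l123'.  Any two of U, U + Q, Q
  determine the third, and U + Q is again uniform, so (U, U + Q, Q) has entropy vector
  (log n - l123') e12 + l123' e123'.  The smallest admissible n is ceil(2^l123'), and each of
  the conditions (i) and (ii) ensures that l12 covers the surplus log n - l123'.
*)

theory Submission
  imports Defs "HOL-Real_Asymp.Real_Asymp" "HOL-Number_Theory.Cong"
begin

lemma exhaust_7:
  fixes x :: 7
  shows "x = 1 \<or> x = 2 \<or> x = 3 \<or> x = 4 \<or> x = 5 \<or> x = 6 \<or> x = 7"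
proof (induct x)
  case (of_int z)
  then have "z = 0 \<or> z = 1 \<or> z = 2 \<or> z = 3 \<or> z = 4 \<or> z = 5 \<or> z = 6" by fastforce
  then show ?case by auto
qed

lemma forall_7: "(\<forall>i::7. P i) \<longleftrightarrow> P 1 \<and> P 2 \<and> P 3 \<and> P 4 \<and> P 5 \<and> P 6 \<and> P 7"
  by (metis exhaust_7)

lemma vector_7 [simp]:
  "(vector [x1, x2, x3, x4, x5, x6, x7] :: 'a::zero ^ 7) $ 1 = x1"
  "(vector [x1, x2, x3, x4, x5, x6, x7] :: 'a::zero ^ 7) $ 2 = x2"
  "(vector [x1, x2, x3, x4, x5, x6, x7] :: 'a::zero ^ 7) $ 3 = x3"
  "(vector [x1, x2, x3, x4, x5, x6, x7] :: 'a::zero ^ 7) $ 4 = x4"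
  "(vector [x1, x2, x3, x4, x5, x6, x7] :: 'a::zero ^ 7) $ 5 = x5"
  "(vector [x1, x2, x3, x4, x5, x6, x7] :: 'a::zero ^ 7) $ 6 = x6"
  "(vector [x1, x2, x3, x4, x5, x6, x7] :: 'a::zero ^ 7) $ 7 = x7"
  unfolding vector_def by simp_all

lemma vec_eq_iff_7:
  "(v :: 'a ^ 7) = w \<longleftrightarrow>
    v$1 = w$1 \<and> v$2 = w$2 \<and> v$3 = w$3 \<and> v$4 = w$4 \<and> v$5 = w$5 \<and> v$6 = w$6 \<and> v$7 = w$7"
  unfolding vec_eq_iff forall_7 ..

lemma shannon_entropy_eq_sum:
  assumes "finite A" "set_pmf p \<subseteq> A"
  shows "shannon_entropy p = (\<Sum>x\<in>A. - pmf p x * log 2 (pmf p x))"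
  unfolding shannon_entropy_def
  by (rule sum.mono_neutral_left) (use assms in \<open>auto simp: set_pmf_iff\<close>)

lemma shannon_entropy_return_pmf [simp]: "shannon_entropy (return_pmf x) = 0"
  unfolding shannon_entropy_def by simp

lemma shannon_entropy_pmf_of_set:
  assumes "finite A" "A \<noteq> {}"
  shows "shannon_entropy (pmf_of_set A) = log 2 (card A)"
proof -
  have "shannon_entropy (pmf_of_set A) = (\<Sum>x\<in>A. - (1 / card A) * log 2 (1 / card A))"
    unfolding shannon_entropy_def using assms by (intro sum.cong) auto
  also have "\<dots> = log 2 (card A)"
    using assms by (simp add: log_divide card_gt_0_iff)
  finally show ?thesis .
qed

lemma shannon_entropy_map_pmf_inj_on:
  assumes "inj_on f (set_pmf p)"
  shows "shannon_entropy (map_pmf f p) = shannon_entropy p"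
  unfolding shannon_entropy_def set_map_pmf
  using assms by (simp add: sum.reindex pmf_map_inj)

lemma shannon_entropy_map_pmf_inj [simp]:
  "inj f \<Longrightarrow> shannon_entropy (map_pmf f p) = shannon_entropy p"
  by (rule shannon_entropy_map_pmf_inj_on) (auto intro: inj_on_subset)

lemma shannon_entropy_map_pmf_same_fibres:
  assumes "\<And>x y. x \<in> set_pmf p \<Longrightarrow> y \<in> set_pmf p \<Longrightarrow> f x = f y \<longleftrightarrow> g x = g y"
  shows "shannon_entropy (map_pmf f p) = shannon_entropy (map_pmf g p)"
proof -
  define \<sigma> where "\<sigma> = f \<circ> inv_into (set_pmf p) g"
  have \<sigma>: "\<sigma> (g x) = f x" if "x \<in> set_pmf p" for x
  proof -
    have "inv_into (set_pmf p) g (g x) \<in> set_pmf p" "g (inv_into (set_pmf p) g (g x)) = g x"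
      using that by (auto intro: inv_into_into f_inv_into_f)
    with that assms show ?thesis unfolding \<sigma>_def by auto
  qed
  have "map_pmf f p = map_pmf \<sigma> (map_pmf g p)"
    unfolding map_pmf_comp by (intro map_pmf_cong) (simp_all add: \<sigma>)
  moreover have "inj_on \<sigma> (set_pmf (map_pmf g p))"
    by (rule inj_onI) (use assms \<sigma> in auto)
  ultimately show ?thesis by (simp add: shannon_entropy_map_pmf_inj_on)
qed

lemma shannon_entropy_pair_pmf:
  assumes "finite (set_pmf p)" "finite (set_pmf q)"
  shows "shannon_entropy (pair_pmf p q) = shannon_entropy p + shannon_entropy q"
proof -
  let ?P = "set_pmf p" and ?Q = "set_pmf q"
  define \<eta>p where "\<eta>p a = - pmf p a * log 2 (pmf p a)" for a
  define \<eta>q where "\<eta>q b = - pmf q b * log 2 (pmf q b)" for b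
  have sum_p: "(\<Sum>a\<in>?P. pmf p a) = 1" and sum_q: "(\<Sum>b\<in>?Q. pmf q b) = 1"
    using assms by (auto intro: sum_pmf_eq_1)
  have "shannon_entropy (pair_pmf p q) =
      (\<Sum>(a, b)\<in>?P \<times> ?Q. - (pmf p a * pmf q b) * log 2 (pmf p a * pmf q b))"
    unfolding shannon_entropy_def set_pair_pmf by (intro sum.cong) (auto simp: pmf_pair)
  also have "\<dots> = (\<Sum>a\<in>?P. \<Sum>b\<in>?Q. \<eta>p a * pmf q b + pmf p a * \<eta>q b)"
    unfolding sum.cartesian_product[symmetric]
  proof (intro sum.cong refl)
    fix a b assume "a \<in> ?P" "b \<in> ?Q"
    then have "pmf p a > 0" "pmf q b > 0" by (simp_all add: pmf_positive)
    then show "- (pmf p a * pmf q b) * log 2 (pmf p a * pmf q b) = \<eta>p a * pmf q b + pmf p a * \<eta>q b"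
      by (simp add: \<eta>p_def \<eta>q_def log_mult algebra_simps)
  qed
  also have "\<dots> = (\<Sum>a\<in>?P. \<eta>p a * (\<Sum>b\<in>?Q. pmf q b) + pmf p a * (\<Sum>b\<in>?Q. \<eta>q b))"
    by (simp only: sum.distrib sum_distrib_left)
  also have "\<dots> = (\<Sum>a\<in>?P. \<eta>p a) + (\<Sum>a\<in>?P. pmf p a) * (\<Sum>b\<in>?Q. \<eta>q b)"
    by (simp only: sum_q sum.distrib sum_distrib_right mult_1_right)
  finally show ?thesis
    unfolding sum_p by (simp add: shannon_entropy_def \<eta>p_def \<eta>q_def)
qed

lemma continuous_on_neg_mult_log2: "continuous_on {0..} (\<lambda>x::real. - x * log 2 x)"
proof -
  have "continuous (at x within {0..}) (\<lambda>x::real. x * ln x)" if "0 \<le> x" for x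
  proof (cases "x = 0")
    case True
    have "((\<lambda>x::real. x * ln x) \<longlongrightarrow> 0) (at_right 0)" by real_asymp
    then show ?thesis unfolding continuous_within True by (simp add: at_within_Ici_at_right)
  next
    case False
    then have "continuous (at x) (\<lambda>x::real. x * ln x)" using that by (intro continuous_intros) auto
    then show ?thesis by (rule continuous_at_imp_continuous_at_within)
  qed
  then have "continuous_on {0..} (\<lambda>x::real. x * ln x * (- 1 / ln 2))"
    by (intro continuous_on_mult_right) (simp add: continuous_on_eq_continuous_within)
  moreover have "(\<lambda>x::real. x * ln x * (- 1 / ln 2)) = (\<lambda>x. - x * log 2 x)"
    by (auto simp: log_def)
  ultimately show ?thesis by metis
qed

text \<open>Mixing a point mass with the uniform distribution on \<open>{..<n}\<close> moves the entropy
  continuously from \<open>0\<close> to \<open>log 2 n\<close>.\<close>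
lemma ex_pmf_lessThan_shannon_entropy:
  assumes "n > 0" "0 \<le> t" "t \<le> log 2 n"
  obtains p :: "nat pmf" where "set_pmf p \<subseteq> {..<n}" "shannon_entropy p = t"
proof -
  define P where "P s = bernoulli_pmf s \<bind> (\<lambda>b. if b then pmf_of_set {..<n} else return_pmf 0)" for s
  define q where "q s i = s * (if i < n then 1 / n else 0) + (1 - s) * (if i = 0 then 1 else 0)"
    for s :: real and i :: nat
  define g where "g s = (\<Sum>i<n. - q s i * log 2 (q s i))" for s
  have pmf_P: "pmf (P s) i = q s i" if "s \<in> {0..1}" for s i
    using that assms(1) unfolding P_def q_def by (auto simp: pmf_bind lessThan_empty_iff)
  have set_P: "set_pmf (P s) \<subseteq> {..<n}" if "s \<in> {0..1}" for s
    using assms(1) by (auto simp: set_pmf_iff pmf_P[OF that] q_def split: if_splits)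
  have entropy_P: "shannon_entropy (P s) = g s" if "s \<in> {0..1}" for s
    using shannon_entropy_eq_sum[OF _ set_P[OF that]] by (simp add: pmf_P[OF that] g_def)
  have "continuous_on {0..1} g"
    unfolding g_def
  proof (intro continuous_on_sum)
    fix i
    have "continuous_on {0..1} (\<lambda>s. q s i)" unfolding q_def by (intro continuous_intros)
    moreover have "(\<lambda>s. q s i) ` {0..1} \<subseteq> {0..}" by (auto simp: q_def)
    ultimately show "continuous_on {0..1} (\<lambda>s. - q s i * log 2 (q s i))"
      by (rule continuous_on_compose2[OF continuous_on_neg_mult_log2])
  qed
  moreover have "P 0 = return_pmf 0" "P 1 = pmf_of_set {..<n}"
    using assms(1) by (auto intro!: pmf_eqI simp: pmf_P q_def lessThan_empty_iff)
  then have "g 0 = 0" "g 1 = log 2 n"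
    using entropy_P[of 0] entropy_P[of 1] assms(1)
    by (simp_all add: shannon_entropy_pmf_of_set lessThan_empty_iff)
  ultimately obtain s where "s \<in> {0..1}" "g s = t"
    using IVT'[of g 0 t 1] assms(2,3) by auto
  with set_P entropy_P that show ?thesis by metis
qed

lemma le_log_ceiling_powr: "t \<le> log 2 (real_of_int \<lceil>2 powr t\<rceil>)"
proof -
  have "log 2 (2 powr t) \<le> log 2 (real_of_int \<lceil>2 powr t\<rceil>)"
    by (intro log_mono) auto
  then show ?thesis by simp
qed

lemma ex_finite_pmf_shannon_entropy:
  assumes "0 \<le> t"
  obtains p :: "nat pmf" where "finite (set_pmf p)" "shannon_entropy p = t"
proof -
  define n where "n = nat \<lceil>2 powr t\<rceil>"
  have "n > 0" "real n = real_of_int \<lceil>2 powr t\<rceil>"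
    by (simp_all add: n_def)
  then obtain p where "set_pmf p \<subseteq> {..<n}" "shannon_entropy p = t"
    using ex_pmf_lessThan_shannon_entropy assms le_log_ceiling_powr by metis
  with that show ?thesis using finite_subset by blast
qed

lemma shannon_entropy_map_pmf_pair_pmf:
  assumes "finite (set_pmf p)" "finite (set_pmf q)"
    and "\<And>x x' y y'. m (x, y) = m (x', y') \<longleftrightarrow> f x = f x' \<and> g y = g y'"
  shows "shannon_entropy (map_pmf m (pair_pmf p q)) =
    shannon_entropy (map_pmf f p) + shannon_entropy (map_pmf g q)"
proof -
  have "shannon_entropy (map_pmf m (pair_pmf p q)) =
      shannon_entropy (map_pmf (\<lambda>(x, y). (f x, g y)) (pair_pmf p q))"
    by (rule shannon_entropy_map_pmf_same_fibres) (auto simp: assms(3))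
  also have "\<dots> = shannon_entropy (map_pmf f p) + shannon_entropy (map_pmf g q)"
    unfolding map_pair using assms(1,2) by (simp add: shannon_entropy_pair_pmf)
  finally show ?thesis .
qed

lemma entropy_vector_map_pmf_inj:
  assumes "inj f" "inj g" "inj h"
  shows "entropy_vector (map_pmf (\<lambda>(x, y, z). (f x, g y, h z)) p) = entropy_vector p"
proof -
  have "inj (\<lambda>(x, y, z). (f x, g y, h z))"
    using assms by (auto simp: inj_def)
  then show ?thesis
    unfolding entropy_vector_def map_pmf_comp
    by (intro arg_cong[where f = vector] arg_cong2[where f = Cons] refl
        shannon_entropy_map_pmf_inj shannon_entropy_map_pmf_same_fibres)
      (auto simp: assms inj_eq)
qed

lemma entropy_vector_in_Gamma3_star:
  fixes p :: "('a::countable \<times> 'b::countable \<times> 'c::countable) pmf"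
  assumes "finite (set_pmf p)"
  shows "entropy_vector p \<in> Gamma3_star"
proof -
  let ?p = "map_pmf (\<lambda>(x, y, z). (to_nat x, to_nat y, to_nat z)) p"
  have "entropy_vector ?p = entropy_vector p"
    by (rule entropy_vector_map_pmf_inj) auto
  moreover have "finite (set_pmf ?p)"
    using assms by simp
  ultimately show ?thesis
    unfolding Gamma3_star_def by (auto intro!: exI[of _ ?p])
qed

text \<open>Independent juxtaposition of two triples adds their entropy vectors.\<close>
lemma Gamma3_star_add:
  assumes "v \<in> Gamma3_star" "w \<in> Gamma3_star"
  shows "v + w \<in> Gamma3_star"
proof -
  obtain p q :: "(nat \<times> nat \<times> nat) pmf"
    where p: "finite (set_pmf p)" "v = entropy_vector p"
      and q: "finite (set_pmf q)" "w = entropy_vector q"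
    using assms unfolding Gamma3_star_def by blast
  define P where
    "P = map_pmf (\<lambda>((x1, x2, x3), (y1, y2, y3)). ((x1, y1), (x2, y2), (x3, y3))) (pair_pmf p q)"
  have "shannon_entropy P = shannon_entropy p + shannon_entropy q"
    unfolding P_def
    by (rule shannon_entropy_map_pmf_pair_pmf[OF p(1) q(1), where f = "\<lambda>x. x" and g = "\<lambda>x. x",
          unfolded map_pmf_ident]) auto
  then have "entropy_vector P = entropy_vector p + entropy_vector q"
    unfolding entropy_vector_def P_def map_pmf_comp vec_eq_iff_7
    by (simp, intro conjI shannon_entropy_map_pmf_pair_pmf p(1) q(1)) auto
  moreover have "finite (set_pmf P)"
    using p(1) q(1) by (simp add: P_def)
  ultimately show ?thesis
    unfolding p(2) q(2) by (metis entropy_vector_in_Gamma3_star)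
qed

lemma map_pmf_add_mod_pair_pmf_uniform:
  fixes n :: nat
  assumes "n > 0"
  shows "map_pmf (\<lambda>(u, q). (u + q) mod n) (pair_pmf (pmf_of_set {..<n}) Q) = pmf_of_set {..<n}"
proof -
  have shift: "map_pmf (\<lambda>u. (u + q) mod n) (pmf_of_set {..<n}) = pmf_of_set {..<n}" for q
  proof (rule map_pmf_of_set_bij_betw)
    have inj: "inj_on (\<lambda>u. (u + q) mod n) {..<n}"
      by (rule inj_onI) (metis cong_add_rcancel_nat cong_def lessThan_iff mod_less)
    moreover have "(\<lambda>u. (u + q) mod n) ` {..<n} = {..<n}"
      by (rule endo_inj_surj) (use assms inj in auto)
    ultimately show "bij_betw (\<lambda>u. (u + q) mod n) {..<n} {..<n}"
      unfolding bij_betw_def ..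
  qed (use assms in auto)
  have "pair_pmf (pmf_of_set {..<n}) Q = Q \<bind> (\<lambda>q. map_pmf (\<lambda>u. (u, q)) (pmf_of_set {..<n}))"
    unfolding pair_pmf_def map_pmf_def by (rule bind_commute_pmf)
  then show ?thesis
    by (simp add: map_bind_pmf map_pmf_comp shift)
qed

lemma entropy_vector_add_mod:
  fixes Q :: "nat pmf"
  assumes "n > 0" "set_pmf Q \<subseteq> {..<n}"
  shows "entropy_vector (map_pmf (\<lambda>(u, q). (u, (u + q) mod n, q)) (pair_pmf (pmf_of_set {..<n}) Q)) =
    (log 2 n - shannon_entropy Q) *\<^sub>R e12 + shannon_entropy Q *\<^sub>R e123'"
proof -
  let ?U = "pmf_of_set {..<n}"
  let ?R = "pair_pmf ?U Q"
  have set_U: "set_pmf ?U = {..<n}" and entropy_U: "shannon_entropy ?U = log 2 n"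
    using assms(1) by (simp_all add: lessThan_empty_iff shannon_entropy_pmf_of_set)
  have "finite (set_pmf Q)"
    using assms(2) finite_subset by blast
  then have entropy_R: "shannon_entropy ?R = log 2 n + shannon_entropy Q"
    by (simp add: shannon_entropy_pair_pmf set_U entropy_U)
  have injective: "shannon_entropy (map_pmf f ?R) = log 2 n + shannon_entropy Q"
    if "inj_on f ({..<n} \<times> {..<n})" for f
  proof -
    have "inj_on f (set_pmf ?R)"
      using that assms(2) by (auto simp: set_U intro: inj_on_subset)
    then show ?thesis by (simp add: shannon_entropy_map_pmf_inj_on entropy_R)
  qed
  have cancel: "(a + x) mod n = (a + y) mod n \<longleftrightarrow> x = y"
    "(x + a) mod n = (y + a) mod n \<longleftrightarrow> x = y"
    if "x < n" "y < n" for a x y :: nat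
    using that
    by (metis cong_add_lcancel_nat cong_def mod_less, metis cong_add_rcancel_nat cong_def mod_less)
  let ?T = "map_pmf (\<lambda>(u, q). (u, (u + q) mod n, q)) ?R"
  txt \<open>On \<open>{..<n} \<times> {..<n}\<close> any two coordinates of \<open>?T\<close> determine the third.\<close>
  have marginal: "map_pmf m ?T = map_pmf g ?R" if "\<And>u q. m (u, (u + q) mod n, q) = g (u, q)" for m g
    unfolding map_pmf_comp by (intro map_pmf_cong) (auto simp: that)
  have "shannon_entropy (map_pmf (\<lambda>(x, y, z). x) ?T) = log 2 n"
    by (subst marginal[of _ fst]) (simp_all add: map_fst_pair_pmf entropy_U)
  moreover have "shannon_entropy (map_pmf (\<lambda>(x, y, z). y) ?T) = log 2 n"
    by (subst marginal[of _ "\<lambda>(u, q). (u + q) mod n"])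
      (simp_all add: map_pmf_add_mod_pair_pmf_uniform assms(1) entropy_U)
  moreover have "shannon_entropy (map_pmf (\<lambda>(x, y, z). z) ?T) = shannon_entropy Q"
    by (subst marginal[of _ snd]) (simp_all add: map_snd_pair_pmf)
  moreover have "shannon_entropy (map_pmf (\<lambda>(x, y, z). (x, y)) ?T) = log 2 n + shannon_entropy Q"
    by (subst marginal[of _ "\<lambda>(u, q). (u, (u + q) mod n)"])
      (auto intro!: injective simp: inj_on_def cancel)
  moreover have "shannon_entropy (map_pmf (\<lambda>(x, y, z). (x, z)) ?T) = log 2 n + shannon_entropy Q"
    by (subst marginal[of _ "\<lambda>x. x"]) (simp_all add: entropy_R)
  moreover have "shannon_entropy (map_pmf (\<lambda>(x, y, z). (y, z)) ?T) = log 2 n + shannon_entropy Q"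
    by (subst marginal[of _ "\<lambda>(u, q). ((u + q) mod n, q)"])
      (auto intro!: injective simp: inj_on_def cancel)
  moreover have "shannon_entropy ?T = log 2 n + shannon_entropy Q"
    by (rule injective) (auto simp: inj_on_def)
  ultimately show ?thesis
    unfolding entropy_vector_def vec_eq_iff_7 by (simp add: e12_def e123'_def algebra_simps)
qed

lemma scaleR_generators_in_Gamma3_star:
  assumes "0 \<le> l"
  shows "l *\<^sub>R e1 \<in> Gamma3_star" "l *\<^sub>R e2 \<in> Gamma3_star"
    and "l *\<^sub>R e3 \<in> Gamma3_star" "l *\<^sub>R e12 \<in> Gamma3_star"
proof -
  obtain A :: "nat pmf" where A: "finite (set_pmf A)" "shannon_entropy A = l"
    using ex_finite_pmf_shannon_entropy assms by blast
  have "entropy_vector (map_pmf (\<lambda>x. (x, (), ())) A) = l *\<^sub>R e1"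
    and "entropy_vector (map_pmf (\<lambda>x. ((), x, ())) A) = l *\<^sub>R e2"
    and "entropy_vector (map_pmf (\<lambda>x. ((), (), x)) A) = l *\<^sub>R e3"
    and "entropy_vector (map_pmf (\<lambda>x. (x, x, ())) A) = l *\<^sub>R e12"
    using A(2)
    by (simp_all add: entropy_vector_def map_pmf_comp vec_eq_iff_7 e1_def e2_def e3_def e12_def inj_def)
  then show "l *\<^sub>R e1 \<in> Gamma3_star" "l *\<^sub>R e2 \<in> Gamma3_star"
    and "l *\<^sub>R e3 \<in> Gamma3_star" "l *\<^sub>R e12 \<in> Gamma3_star"
    using entropy_vector_in_Gamma3_star A(1) by (metis finite_imageI set_map_pmf)+
qed

lemma scaleR_e12_plus_e123'_in_Gamma3_star:
  assumes "0 \<le> t" "log 2 (real_of_int \<lceil>2 powr t\<rceil>) \<le> s + t"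
  shows "s *\<^sub>R e12 + t *\<^sub>R e123' \<in> Gamma3_star"
proof -
  define n where "n = nat \<lceil>2 powr t\<rceil>"
  have "n > 0" and n: "real n = real_of_int \<lceil>2 powr t\<rceil>"
    by (simp_all add: n_def)
  then obtain Q where Q: "set_pmf Q \<subseteq> {..<n}" "shannon_entropy Q = t"
    using ex_pmf_lessThan_shannon_entropy assms(1) le_log_ceiling_powr by metis
  have "finite (set_pmf Q)"
    using Q(1) finite_subset by blast
  with \<open>n > 0\<close> have "(log 2 n - t) *\<^sub>R e12 + t *\<^sub>R e123' \<in> Gamma3_star"
    using entropy_vector_in_Gamma3_star
      [of "map_pmf (\<lambda>(u, q). (u, (u + q) mod n, q)) (pair_pmf (pmf_of_set {..<n}) Q)"]
    by (simp add: entropy_vector_add_mod Q lessThan_empty_iff)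
  moreover have "(s - (log 2 n - t)) *\<^sub>R e12 \<in> Gamma3_star"
    using assms(2) n by (intro scaleR_generators_in_Gamma3_star) simp
  ultimately have "(s - (log 2 n - t)) *\<^sub>R e12 + ((log 2 n - t) *\<^sub>R e12 + t *\<^sub>R e123') \<in> Gamma3_star"
    by (rule Gamma3_star_add[rotated])
  then show ?thesis
    by (simp add: scaleR_left_diff_distrib algebra_simps)
qed

theorem corollary2:
  shows "Omega_in \<subseteq> Omega \<inter> Gamma3_star"
proof
  fix v assume "v \<in> Omega_in"
  then obtain l1 l2 l3 l12 l123
    where v: "v = l1 *\<^sub>R e1 + l2 *\<^sub>R e2 + l3 *\<^sub>R e3 + l12 *\<^sub>R e12 + l123 *\<^sub>R e123'"
      and nonneg: "l1 \<ge> 0" "l2 \<ge> 0" "l3 \<ge> 0" "l12 \<ge> 0" "l123 \<ge> 0"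
      and cond: "l12 + l123 \<ge> log 2 (real_of_int \<lceil>2 powr l123\<rceil>) \<or>
        (\<exists>m::nat. m \<ge> 1 \<and> l123 = log 2 (real m))"
    unfolding Omega_in_def by blast
  have "log 2 (real_of_int \<lceil>2 powr l123\<rceil>) \<le> l12 + l123"
    using cond nonneg(4) by auto
  then have "l12 *\<^sub>R e12 + l123 *\<^sub>R e123' \<in> Gamma3_star"
    using nonneg(5) by (rule scaleR_e12_plus_e123'_in_Gamma3_star[rotated])
  then have "v \<in> Gamma3_star"
    unfolding v add.assoc using nonneg
    by (metis Gamma3_star_add scaleR_generators_in_Gamma3_star(1-3))
  moreover have "v \<in> Omega"
    unfolding Omega_def v using nonneg by blast
  ultimately show "v \<in> Omega \<inter> Gamma3_star" by blast
qed

end
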